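(* Let $g$ be a non-negative integer and let $G$ be a connected graph of order $n$ which has a $g$-good-neighbor cut. Then $$0\leq g\leq \min\left\{\Delta(G),\left\lfloor \frac{n-3}{2}\right\rfloor\right\}$$ and $$e(G)\leq {n\choose 2}-(g+1)^2.$$
   Context: For a connected graph $G=(V,E)$ and integer $g\ge0$: a set $F\subseteq V$ is a $g$-good-neighbor faulty set if $|N(v)\cap (V-F)|\geq g$ for every $v\in V-F$; a $g$-good-neighbor cut is such an $F$ with $G-F$ disconnected. $e(G)$ is the number of edges and $\Delta(G)$ the maximum degree. *)

theory Defs
  imports Complex_Main
begin

definition simple_graph :: "'a set \<Rightarrow> 'a set set \<Rightarrow> bool" where
  "simple_graph V E \<longleftrightarrow> finite V \<and> (\<forall>e\<in>E. e \<subseteq> V \<and> card e = 2)"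

definition nbhd :: "'a set set \<Rightarrow> 'a \<Rightarrow> 'a set" where
  "nbhd E v = {u. {u, v} \<in> E}"

definition degree :: "'a set set \<Rightarrow> 'a \<Rightarrow> nat" where
  "degree E v = card (nbhd E v)"

definition max_degree :: "'a set \<Rightarrow> 'a set set \<Rightarrow> nat" where
  "max_degree V E = Max (degree E ` V)"

definition adj_in :: "'a set set \<Rightarrow> 'a set \<Rightarrow> ('a \<times> 'a) set" where
  "adj_in E S = {(u, v). u \<in> S \<and> v \<in> S \<and> {u, v} \<in> E}"

definition connected_on :: "'a set set \<Rightarrow> 'a set \<Rightarrow> bool" where
  "connected_on E S \<longleftrightarrow> S \<noteq> {} \<and> (\<forall>u\<in>S. \<forall>v\<in>S. (u, v) \<in> (adj_in E S)\<^sup>*)"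

definition connected_graph :: "'a set \<Rightarrow> 'a set set \<Rightarrow> bool" where
  "connected_graph V E \<longleftrightarrow> simple_graph V E \<and> connected_on E V"

definition disconnected_on :: "'a set set \<Rightarrow> 'a set \<Rightarrow> bool" where
  "disconnected_on E S \<longleftrightarrow> (\<exists>u\<in>S. \<exists>v\<in>S. (u, v) \<notin> (adj_in E S)\<^sup>*)"

definition good_neighbor_faulty_set :: "'a set \<Rightarrow> 'a set set \<Rightarrow> nat \<Rightarrow> 'a set \<Rightarrow> bool" where
  "good_neighbor_faulty_set V E g F \<longleftrightarrow>
     F \<subseteq> V \<and> (\<forall>v\<in>V - F. card (nbhd E v \<inter> (V - F)) \<ge> g)"

definition good_neighbor_cut :: "'a set \<Rightarrow> 'a set set \<Rightarrow> nat \<Rightarrow> 'a set \<Rightarrow> bool" where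
  "good_neighbor_cut V E g F \<longleftrightarrow>
     good_neighbor_faulty_set V E g F \<and> disconnected_on E (V - F)"

end

theory Submission
  imports Defs
begin

text \<open>Let F be a g-good-neighbor cut. Every surviving vertex keeps g neighbours inside
its own component of G - F, so G - F splits into two vertex sets C and D, each of size at
least g + 1, with no edge between them. Since G is connected, F is nonempty, giving
n \<ge> 2(g + 1) + 1; and the |C| |D| \<ge> (g + 1)^2 pairs between C and D are all non-edges.\<close>

lemma simple_graph_no_loop:
  assumes "simple_graph V E"
  shows "{w, w} \<notin> E"
  using assms by (auto simp: simple_graph_def)

lemma simple_graph_nbhd_subset:
  assumes "simple_graph V E"
  shows "nbhd E v \<subseteq> V"
  using assms by (auto simp: simple_graph_def nbhd_def)

lemma degree_le_max_degree:
  assumes "finite V" and "v \<in> V"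
  shows "degree E v \<le> max_degree V E"
  using assms by (simp add: max_degree_def)

definition component_in :: "'a set set \<Rightarrow> 'a set \<Rightarrow> 'a \<Rightarrow> 'a set" where
  "component_in E S u = {w \<in> S. (u, w) \<in> (adj_in E S)\<^sup>*}"

lemma component_in_closed:
  assumes "c \<in> component_in E S u" and "w \<in> S" and "{c, w} \<in> E"
  shows "w \<in> component_in E S u"
proof -
  have "(c, w) \<in> adj_in E S" using assms by (auto simp: adj_in_def component_in_def)
  then show ?thesis
    using assms by (auto simp: component_in_def intro: rtrancl_into_rtrancl)
qed

lemma card_ge_of_nbhd_within:
  assumes "finite X" and "x \<in> X" and "{x, x} \<notin> E"
    and "nbhd E x \<inter> S \<subseteq> X" and "g \<le> card (nbhd E x \<inter> S)"
  shows "g + 1 \<le> card X"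
proof -
  have "nbhd E x \<inter> S \<subseteq> X - {x}" using assms(3,4) by (auto simp: nbhd_def)
  then have "card (nbhd E x \<inter> S) \<le> card (X - {x})"
    using assms(1) by (intro card_mono) auto
  moreover have "card (X - {x}) + 1 = card X"
    using assms(1,2) by (metis Suc_eq_plus1 card_Suc_Diff1)
  ultimately show ?thesis using assms(5) by linarith
qed

lemma good_neighbor_cut_separated_parts:
  assumes sg: "simple_graph V E" and cut: "good_neighbor_cut V E g F"
  obtains C D where "C \<subseteq> V - F" "D \<subseteq> V - F" "C \<inter> D = {}"
    "g + 1 \<le> card C" "g + 1 \<le> card D" "\<forall>c\<in>C. \<forall>d\<in>D. {c, d} \<notin> E"
proof -
  let ?S = "V - F"
  have finS: "finite ?S" using sg by (simp add: simple_graph_def)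
  have good: "g \<le> card (nbhd E w \<inter> ?S)" if "w \<in> ?S" for w
    using cut that by (auto simp: good_neighbor_cut_def good_neighbor_faulty_set_def)
  obtain u v where u: "u \<in> ?S" and v: "v \<in> ?S" and uv: "(u, v) \<notin> (adj_in E ?S)\<^sup>*"
    using cut by (auto simp: good_neighbor_cut_def disconnected_on_def)
  define C where "C = component_in E ?S u"
  define D where "D = ?S - C"
  have CS: "C \<subseteq> ?S" by (auto simp: C_def component_in_def)
  have uC: "u \<in> C" using u by (simp add: C_def component_in_def)
  have vD: "v \<in> D" using v uv by (simp add: D_def C_def component_in_def)
  have no_edge: "\<forall>c\<in>C. \<forall>d\<in>D. {c, d} \<notin> E"
    using component_in_closed by (fastforce simp: C_def D_def)
  have "nbhd E u \<inter> ?S \<subseteq> C"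
    using uC component_in_closed by (fastforce simp: C_def nbhd_def insert_commute)
  then have "g + 1 \<le> card C"
    using finS CS uC u good simple_graph_no_loop[OF sg]
    by (intro card_ge_of_nbhd_within[where S = ?S]) (auto intro: finite_subset)
  moreover have "nbhd E v \<inter> ?S \<subseteq> D"
    using vD no_edge by (fastforce simp: D_def nbhd_def)
  then have "g + 1 \<le> card D"
    using finS vD v good simple_graph_no_loop[OF sg]
    by (intro card_ge_of_nbhd_within[where S = ?S]) (auto simp: D_def)
  moreover have "D \<subseteq> ?S" "C \<inter> D = {}" by (auto simp: D_def)
  ultimately show thesis using that CS no_edge by blast
qed

lemma good_neighbor_cut_nonempty:
  assumes "connected_on E V" and "good_neighbor_cut V E g F"
  shows "F \<noteq> {}"
  using assms by (auto simp: connected_on_def good_neighbor_cut_def disconnected_on_def)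

lemma good_neighbor_cut_le_max_degree:
  assumes sg: "simple_graph V E" and cut: "good_neighbor_cut V E g F"
  shows "g \<le> max_degree V E"
proof -
  obtain u where u: "u \<in> V - F"
    using cut by (auto simp: good_neighbor_cut_def disconnected_on_def)
  have finV: "finite V" using sg by (simp add: simple_graph_def)
  have "g \<le> card (nbhd E u \<inter> (V - F))"
    using cut u by (auto simp: good_neighbor_cut_def good_neighbor_faulty_set_def)
  also have "\<dots> \<le> degree E u"
    unfolding degree_def
    using finite_subset[OF simple_graph_nbhd_subset[OF sg] finV] by (intro card_mono) auto
  also have "\<dots> \<le> max_degree V E" using finV u by (intro degree_le_max_degree) auto
  finally show ?thesis .
qed

lemma simple_graph_card_edges_separated:
  assumes sg: "simple_graph V E" and "C \<subseteq> V" "D \<subseteq> V" "C \<inter> D = {}"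
    and no_edge: "\<forall>c\<in>C. \<forall>d\<in>D. {c, d} \<notin> E"
  shows "card E + card C * card D \<le> card V choose 2"
proof -
  define P where "P = {B. B \<subseteq> V \<and> card B = 2}"
  define X where "X = (\<lambda>(c, d). {c, d}) ` (C \<times> D)"
  have finV: "finite V" using sg by (simp add: simple_graph_def)
  have finP: "finite P" unfolding P_def using finV by (auto intro: finite_subset[of _ "Pow V"])
  have XP: "X \<subseteq> P" using assms(2-4) by (auto simp: X_def P_def card_insert_if)
  have EX: "E \<subseteq> P - X" using sg no_edge by (auto simp: P_def X_def simple_graph_def)
  have "inj_on (\<lambda>(c, d). {c, d}) (C \<times> D)"
    using assms(4) by (auto simp: inj_on_def doubleton_eq_iff)
  then have "card X = card C * card D"
    by (simp add: X_def card_image card_cartesian_product)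
  moreover have "card E + card X \<le> card P"
    using card_mono[OF finite_Diff[OF finP] EX] card_Diff_subset[OF finite_subset[OF XP finP] XP]
      card_mono[OF finP XP] by linarith
  moreover have "card P = card V choose 2" unfolding P_def using finV by (rule n_subsets)
  ultimately show ?thesis by simp
qed

lemma good_neighbor_cut_card_vertices_ge:
  assumes cg: "connected_graph V E" and cut: "good_neighbor_cut V E g F"
  shows "2 * g + 3 \<le> card V"
proof -
  have sg: "simple_graph V E" and con: "connected_on E V"
    using cg by (auto simp: connected_graph_def)
  have finV: "finite V" using sg by (simp add: simple_graph_def)
  have FV: "F \<subseteq> V"
    using cut by (simp add: good_neighbor_cut_def good_neighbor_faulty_set_def)
  obtain C D where CD: "C \<subseteq> V - F" "D \<subseteq> V - F" "C \<inter> D = {}"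
    and card_CD: "g + 1 \<le> card C" "g + 1 \<le> card D"
    by (rule good_neighbor_cut_separated_parts[OF sg cut])
  have "C \<subseteq> V" "D \<subseteq> V" using CD by auto
  then have fin: "finite F" "finite C" "finite D"
    using FV finV by (auto intro: finite_subset)
  have "1 \<le> card F"
    using good_neighbor_cut_nonempty[OF con cut] fin by (simp add: Suc_le_eq card_gt_0_iff)
  moreover have "card (F \<union> C \<union> D) = card F + card C + card D"
  proof -
    have "card (F \<union> C \<union> D) = card (F \<union> C) + card D"
      using CD fin by (intro card_Un_disjoint) auto
    also have "card (F \<union> C) = card F + card C"
      using CD fin by (intro card_Un_disjoint) auto
    finally show ?thesis .
  qed
  moreover have "card (F \<union> C \<union> D) \<le> card V"
    using CD FV finV by (intro card_mono) auto
  ultimately show ?thesis using card_CD by linarith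
qed

theorem proposition1p1:
  fixes V :: "'a set" and E :: "'a set set" and g :: nat
  assumes "connected_graph V E"
    and "\<exists>F. good_neighbor_cut V E g F"
  shows "0 \<le> g \<and> int g \<le> min (int (max_degree V E)) (floor ((real (card V) - 3) / 2))
         \<and> int (card E) \<le> int (card V choose 2) - (int g + 1)^2"
proof -
  have sg: "simple_graph V E" using assms(1) by (simp add: connected_graph_def)
  obtain F where cut: "good_neighbor_cut V E g F" using assms(2) by blast
  obtain C D where CD: "C \<subseteq> V - F" "D \<subseteq> V - F" "C \<inter> D = {}"
    and card_C: "g + 1 \<le> card C" and card_D: "g + 1 \<le> card D"
    and no_edge: "\<forall>c\<in>C. \<forall>d\<in>D. {c, d} \<notin> E"
    by (rule good_neighbor_cut_separated_parts[OF sg cut])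
  have "int g \<le> floor ((real (card V) - 3) / 2)"
    using good_neighbor_cut_card_vertices_ge[OF assms(1) cut] by (simp add: le_floor_iff field_simps)
  moreover have "(g + 1) * (g + 1) \<le> card C * card D"
    using card_C card_D by (rule mult_le_mono)
  then have "card E + (g + 1) * (g + 1) \<le> card V choose 2"
    using simple_graph_card_edges_separated[OF sg _ _ CD(3) no_edge] CD by fastforce
  then have "int (card E) \<le> int (card V choose 2) - (int g + 1)^2"
    by (simp add: power2_eq_square algebra_simps flip: of_nat_add of_nat_mult of_nat_le_iff)
  ultimately show ?thesis using good_neighbor_cut_le_max_degree[OF sg cut] by simp
qed

end
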